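(* Let $G=(V,E)$ be a $3$-regular graph. Then there exists a polynomial $P(\cdot,\cdot)$ in two variables with integer coefficients such that for all $a,b\in\mathbb{C}$, $$\sum_{\sigma:V\to\{0,1\}}\prod_{\{u,v\}\in E} g_{a,b}(\sigma(u),\sigma(v)) = P(ab,\,a^3+b^3),$$ where $g_{a,b}(0,0)=a$, $g_{a,b}(0,1)=g_{a,b}(1,0)=1$, $g_{a,b}(1,1)=b$. *)

theory Defs
  imports Complex_Main "HOL-Library.FuncSet"
begin

definition three_regular_graph :: "'v set \<Rightarrow> 'v set set \<Rightarrow> bool" where
  "three_regular_graph V E \<longleftrightarrow>
     finite V \<and> (\<forall>e\<in>E. e \<subseteq> V \<and> card e = 2) \<and> (\<forall>v\<in>V. card {e\<in>E. v \<in> e} = 3)"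

definition gab :: "complex \<Rightarrow> complex \<Rightarrow> nat \<Rightarrow> nat \<Rightarrow> complex" where
  "gab a b i j = (if i = 0 \<and> j = 0 then a else if i = 1 \<and> j = 1 then b else 1)"

text \<open>The two endpoints of an edge e = {u,v} (g is symmetric, so the order is irrelevant).\<close>
definition end1 :: "'v set \<Rightarrow> 'v" where "end1 e = (SOME u. u \<in> e)"
definition end2 :: "'v set \<Rightarrow> 'v" where "end2 e = (SOME v. v \<in> e \<and> v \<noteq> end1 e)"

definition partition_fn :: "'v set \<Rightarrow> 'v set set \<Rightarrow> complex \<Rightarrow> complex \<Rightarrow> complex" where
  "partition_fn V E a b =
     (\<Sum>\<sigma> \<in> V \<rightarrow>\<^sub>E {0::nat, 1}. \<Prod>e\<in>E. gab a b (\<sigma> (end1 e)) (\<sigma> (end2 e)))"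

end

theory Submission
  imports Defs "HOL-Computational_Algebra.Polynomial"
begin

text \<open>
  Let \<open>P \<sigma>\<close> and \<open>Q \<sigma>\<close> count the edges whose two endpoints are both coloured 0, resp. 1, so
  that the summand for \<open>\<sigma>\<close> is \<open>a^P b^Q\<close>. Summing the weight \<open>\<plusminus>1\<close> of the colour over the
  endpoints of all edges gives \<open>2 (P - Q)\<close> edgewise and, by 3-regularity, a multiple of 3
  vertexwise; hence \<open>P \<equiv> Q (mod 3)\<close>. Swapping the two colours swaps \<open>P\<close> and \<open>Q\<close>, so the sum
  is a sum of terms \<open>a^p b^q + a^q b^p = (ab)^q (a^(3d) + b^(3d))\<close> with \<open>p = q + 3d\<close>, and
  \<open>a^(3d) + b^(3d)\<close> is an integer polynomial in \<open>ab\<close> and \<open>a^3 + b^3\<close> by the recurrence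
  \<open>h (d + 2) = (a^3 + b^3) h (d + 1) - (ab)^3 h d\<close>.
\<close>

definition int_poly :: "'a::ring_1 poly \<Rightarrow> bool" where
  "int_poly p \<longleftrightarrow> (\<forall>i. coeff p i \<in> \<int>)"

lemma int_poly_add: "int_poly p \<Longrightarrow> int_poly q \<Longrightarrow> int_poly (p + q)"
  by (simp add: int_poly_def)

lemma int_poly_diff: "int_poly p \<Longrightarrow> int_poly q \<Longrightarrow> int_poly (p - q)"
  by (simp add: int_poly_def)

lemma int_poly_sum: "(\<And>k. k \<in> A \<Longrightarrow> int_poly (p k)) \<Longrightarrow> int_poly (\<Sum>k\<in>A. p k)"
  by (simp add: int_poly_def coeff_sum Ints_sum)

lemma int_poly_mult: "int_poly p \<Longrightarrow> int_poly q \<Longrightarrow> int_poly (p * q)"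
  by (simp add: int_poly_def coeff_mult Ints_sum Ints_mult)

text \<open>A bivariate polynomial is an element of \<open>'a poly poly\<close>; \<open>poly (poly P [:y:]) x\<close> evaluates
  it at \<open>(x, y)\<close>, the outer variable being \<open>y\<close>.\<close>

definition int_bipoly :: "'a::comm_ring_1 poly poly \<Rightarrow> bool" where
  "int_bipoly P \<longleftrightarrow> (\<forall>j. int_poly (coeff P j))"

lemma int_bipoly_add: "int_bipoly P \<Longrightarrow> int_bipoly Q \<Longrightarrow> int_bipoly (P + Q)"
  by (simp add: int_bipoly_def int_poly_add)

lemma int_bipoly_diff: "int_bipoly P \<Longrightarrow> int_bipoly Q \<Longrightarrow> int_bipoly (P - Q)"
  by (simp add: int_bipoly_def int_poly_diff)

lemma int_bipoly_mult: "int_bipoly P \<Longrightarrow> int_bipoly Q \<Longrightarrow> int_bipoly (P * Q)"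
  by (simp add: int_bipoly_def coeff_mult int_poly_sum int_poly_mult)

lemma poly_eq_sum_upto:
  fixes p :: "'a::comm_semiring_1 poly"
  assumes "degree p \<le> n"
  shows "poly p x = (\<Sum>i\<le>n. coeff p i * x ^ i)"
proof -
  have "poly p x = poly (\<Sum>i\<le>n. monom (coeff p i) i) x"
    by (simp only: poly_as_sum_of_monoms'[OF assms])
  then show ?thesis by (simp add: poly_sum poly_monom)
qed

lemma int_bipoly_eval_eq_double_sum:
  fixes P :: "'a::comm_ring_1 poly poly"
  assumes "int_bipoly P"
  shows "\<exists>N (c :: nat \<Rightarrow> nat \<Rightarrow> int). \<forall>x y.
           poly (poly P [:y:]) x = (\<Sum>i\<le>N. \<Sum>j\<le>N. of_int (c i j) * x ^ i * y ^ j)"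
proof -
  define N where "N = degree P + (\<Sum>j\<le>degree P. degree (coeff P j))"
  have deg_outer: "degree P \<le> N" by (simp add: N_def)
  have deg_inner: "degree (coeff P j) \<le> N" for j
  proof (cases "j \<le> degree P")
    case True
    then have "degree (coeff P j) \<le> (\<Sum>j\<le>degree P. degree (coeff P j))"
      by (intro member_le_sum) auto
    then show ?thesis by (simp add: N_def)
  qed (simp add: coeff_eq_0)
  have "\<forall>i j. \<exists>k. coeff (coeff P j) i = of_int k"
    using assms by (auto simp: int_bipoly_def int_poly_def elim!: Ints_cases)
  then obtain c where c: "\<And>i j. coeff (coeff P j) i = of_int (c i j)" by metis
  have "poly (poly P [:y:]) x = (\<Sum>i\<le>N. \<Sum>j\<le>N. of_int (c i j) * x ^ i * y ^ j)" for x y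
  proof -
    have "poly (poly P [:y:]) x = (\<Sum>j\<le>N. poly (coeff P j) x * y ^ j)"
      by (simp add: poly_eq_sum_upto[OF deg_outer] poly_sum poly_const_pow mult.commute)
    also have "\<dots> = (\<Sum>j\<le>N. \<Sum>i\<le>N. of_int (c i j) * x ^ i * y ^ j)"
      by (simp add: poly_eq_sum_upto[OF deg_inner] c sum_distrib_right)
    finally show ?thesis by (rule trans[OF _ sum.swap])
  qed
  then show ?thesis by blast
qed

definition int_poly_in_ab_cubes :: "(complex \<Rightarrow> complex \<Rightarrow> complex) \<Rightarrow> bool" where
  "int_poly_in_ab_cubes f \<longleftrightarrow>
     (\<exists>P. int_bipoly P \<and> (\<forall>a b. f a b = poly (poly P [:a ^ 3 + b ^ 3:]) (a * b)))"

lemma int_poly_in_ab_cubes_of_int: "int_poly_in_ab_cubes (\<lambda>a b. of_int k)"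
  unfolding int_poly_in_ab_cubes_def
  by (rule exI[of _ "[:[:of_int k:]:]"]) (simp add: int_bipoly_def int_poly_def coeff_pCons split: nat.split)

lemma int_poly_in_ab_cubes_one: "int_poly_in_ab_cubes (\<lambda>a b. 1)"
  using int_poly_in_ab_cubes_of_int[of 1] by simp

lemma int_poly_in_ab_cubes_ab: "int_poly_in_ab_cubes (\<lambda>a b. a * b)"
  unfolding int_poly_in_ab_cubes_def
  by (rule exI[of _ "[:[:0, 1:]:]"]) (simp add: int_bipoly_def int_poly_def coeff_pCons split: nat.split)

lemma int_poly_in_ab_cubes_cubes: "int_poly_in_ab_cubes (\<lambda>a b. a ^ 3 + b ^ 3)"
  unfolding int_poly_in_ab_cubes_def
  by (rule exI[of _ "[:0, 1:]"]) (simp add: int_bipoly_def int_poly_def coeff_pCons split: nat.split)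

lemma int_poly_in_ab_cubes_add:
  "int_poly_in_ab_cubes f \<Longrightarrow> int_poly_in_ab_cubes g \<Longrightarrow> int_poly_in_ab_cubes (\<lambda>a b. f a b + g a b)"
  unfolding int_poly_in_ab_cubes_def by (metis int_bipoly_add poly_add)

lemma int_poly_in_ab_cubes_diff:
  "int_poly_in_ab_cubes f \<Longrightarrow> int_poly_in_ab_cubes g \<Longrightarrow> int_poly_in_ab_cubes (\<lambda>a b. f a b - g a b)"
  unfolding int_poly_in_ab_cubes_def by (metis int_bipoly_diff poly_diff)

lemma int_poly_in_ab_cubes_mult:
  "int_poly_in_ab_cubes f \<Longrightarrow> int_poly_in_ab_cubes g \<Longrightarrow> int_poly_in_ab_cubes (\<lambda>a b. f a b * g a b)"
  unfolding int_poly_in_ab_cubes_def by (metis int_bipoly_mult poly_mult)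

lemma int_poly_in_ab_cubes_power:
  "int_poly_in_ab_cubes f \<Longrightarrow> int_poly_in_ab_cubes (\<lambda>a b. f a b ^ n)"
  by (induction n) (simp_all add: int_poly_in_ab_cubes_one int_poly_in_ab_cubes_mult)

lemma int_poly_in_ab_cubes_sum:
  "finite A \<Longrightarrow> (\<And>x. x \<in> A \<Longrightarrow> int_poly_in_ab_cubes (f x)) \<Longrightarrow>
     int_poly_in_ab_cubes (\<lambda>a b. \<Sum>x\<in>A. f x a b)"
  by (induction A rule: finite_induct)
     (simp_all add: int_poly_in_ab_cubes_add int_poly_in_ab_cubes_of_int[of 0, simplified])

lemma int_poly_in_ab_cubes_cube_power_sum: "int_poly_in_ab_cubes (\<lambda>a b. a ^ (3 * d) + b ^ (3 * d))"
proof -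
  let ?h = "\<lambda>d a b. a ^ (3 * d) + b ^ (3 * d) :: complex"
  have "int_poly_in_ab_cubes (?h d) \<and> int_poly_in_ab_cubes (?h (Suc d))"
  proof (induction d)
    case 0
    then show ?case
      using int_poly_in_ab_cubes_of_int[of 2] int_poly_in_ab_cubes_cubes by simp
  next
    case (Suc d)
    have "?h (Suc (Suc d)) = (\<lambda>a b. (a ^ 3 + b ^ 3) * ?h (Suc d) a b - (a * b) ^ 3 * ?h d a b)"
      unfolding power_mult power_mult_distrib by (simp add: algebra_simps)
    moreover have "int_poly_in_ab_cubes \<dots>"
      using Suc.IH by (intro int_poly_in_ab_cubes_diff int_poly_in_ab_cubes_mult
          int_poly_in_ab_cubes_cubes int_poly_in_ab_cubes_power int_poly_in_ab_cubes_ab) simp_all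
    ultimately show ?case using Suc.IH by simp
  qed
  then show ?thesis by blast
qed

lemma int_poly_in_ab_cubes_symmetric_monomial:
  assumes "(3::int) dvd (int p - int q)"
  shows "int_poly_in_ab_cubes (\<lambda>a b. a ^ p * b ^ q + a ^ q * b ^ p)"
proof -
  have ordered: "int_poly_in_ab_cubes (\<lambda>a b. a ^ (q + 3 * d) * b ^ q + a ^ q * b ^ (q + 3 * d))"
    for q d :: nat
  proof -
    have "(\<lambda>a b. a ^ (q + 3 * d) * b ^ q + a ^ q * b ^ (q + 3 * d)) =
          (\<lambda>a b. (a * b) ^ q * (a ^ (3 * d) + b ^ (3 * d)) :: complex)"
      unfolding power_add power_mult_distrib by (simp add: algebra_simps)
    then show ?thesis
      by (simp only:) (intro int_poly_in_ab_cubes_mult int_poly_in_ab_cubes_power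
          int_poly_in_ab_cubes_ab int_poly_in_ab_cubes_cube_power_sum)
  qed
  obtain k where k: "int p - int q = 3 * k"
    using assms by blast
  then have "p = q + 3 * nat k \<or> q = p + 3 * nat (- k)"
    by (cases "0 \<le> k") auto
  then show ?thesis
  proof
    assume "p = q + 3 * nat k"
    then show ?thesis using ordered by simp
  next
    assume "q = p + 3 * nat (- k)"
    then show ?thesis using ordered[of p "nat (- k)"] by (simp add: add.commute)
  qed
qed

lemma int_poly_in_ab_cubes_imp_double_sum:
  assumes "int_poly_in_ab_cubes f"
  shows "\<exists>(N::nat) (c :: nat \<Rightarrow> nat \<Rightarrow> int). \<forall>a b.
           f a b = (\<Sum>i\<le>N. \<Sum>j\<le>N. of_int (c i j) * (a * b) ^ i * (a ^ 3 + b ^ 3) ^ j)"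
proof -
  obtain P where P: "int_bipoly P" and f: "\<And>a b. f a b = poly (poly P [:a ^ 3 + b ^ 3:]) (a * b)"
    using assms unfolding int_poly_in_ab_cubes_def by blast
  obtain N c where "\<And>x y. poly (poly P [:y:]) x = (\<Sum>i\<le>N. \<Sum>j\<le>N. of_int (c i j) * x ^ i * y ^ j)"
    using int_bipoly_eval_eq_double_sum[OF P] by blast
  then show ?thesis
    by (intro exI[of _ N] exI[of _ c] allI) (simp only: f)
qed

lemma three_regular_graphD:
  assumes "three_regular_graph V E"
  shows "finite V" "finite E" "\<And>e. e \<in> E \<Longrightarrow> e \<subseteq> V" "\<And>e. e \<in> E \<Longrightarrow> card e = 2"
    "\<And>v. v \<in> V \<Longrightarrow> card {e\<in>E. v \<in> e} = 3"
  using assms finite_subset[of E "Pow V"] unfolding three_regular_graph_def by auto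

lemma edge_eq_end1_end2:
  assumes "card e = 2"
  shows "e = {end1 e, end2 e}"
proof -
  obtain u w where e: "e = {u, w}" "u \<noteq> w"
    using assms by (auto simp: card_2_iff)
  have end1: "end1 e \<in> e"
    unfolding end1_def by (rule someI[of _ u]) (simp add: e)
  have "\<exists>v. v \<in> e \<and> v \<noteq> end1 e"
    using e by (cases "end1 e = u") auto
  then have end2: "end2 e \<in> e \<and> end2 e \<noteq> end1 e"
    unfolding end2_def by (rule someI_ex)
  have "e = {x, y}" if "x \<in> e" "y \<in> e" "x \<noteq> y" for x y
    using that e by blast
  then show ?thesis
    using end1 end2 by blast
qed

definition monochromatic_edges :: "'v set set \<Rightarrow> ('v \<Rightarrow> nat) \<Rightarrow> nat \<Rightarrow> 'v set set" where
  "monochromatic_edges E \<sigma> k = {e\<in>E. \<forall>v\<in>e. \<sigma> v = k}"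

lemma gab_eq_monochromatic_factors:
  "e = {u, w} \<Longrightarrow> gab a b (\<sigma> u) (\<sigma> w) =
     (if \<forall>v\<in>e. \<sigma> v = 0 then a else 1) * (if \<forall>v\<in>e. \<sigma> v = 1 then b else 1)"
  by (simp add: gab_def)

lemma prod_gab_eq_monochromatic:
  assumes "finite E" "\<And>e. e \<in> E \<Longrightarrow> card e = 2"
  shows "(\<Prod>e\<in>E. gab a b (\<sigma> (end1 e)) (\<sigma> (end2 e))) =
           a ^ card (monochromatic_edges E \<sigma> 0) * b ^ card (monochromatic_edges E \<sigma> 1)"
proof -
  have "(\<Prod>e\<in>E. gab a b (\<sigma> (end1 e)) (\<sigma> (end2 e))) =
        (\<Prod>e\<in>E. (if \<forall>v\<in>e. \<sigma> v = 0 then a else 1) * (if \<forall>v\<in>e. \<sigma> v = 1 then b else 1))"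
    using assms(2) edge_eq_end1_end2 by (intro prod.cong refl gab_eq_monochromatic_factors) blast
  also have "\<dots> = a ^ card (monochromatic_edges E \<sigma> 0) * b ^ card (monochromatic_edges E \<sigma> 1)"
    using assms(1) by (simp add: prod.distrib monochromatic_edges_def flip: prod.inter_filter)
  finally show ?thesis .
qed

lemma sum_edges_sum_endpoints:
  fixes f :: "'v \<Rightarrow> 'a::comm_semiring_1"
  assumes "finite V" "finite E" "\<And>e. e \<in> E \<Longrightarrow> e \<subseteq> V"
  shows "(\<Sum>e\<in>E. \<Sum>v\<in>e. f v) = (\<Sum>v\<in>V. of_nat (card {e\<in>E. v \<in> e}) * f v)"
proof -
  have "(\<Sum>e\<in>E. \<Sum>v\<in>e. f v) = (\<Sum>e\<in>E. \<Sum>v\<in>V. if v \<in> e then f v else 0)"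
  proof (rule sum.cong[OF refl])
    fix e assume "e \<in> E"
    then have "{v\<in>V. v \<in> e} = e" using assms(3) by blast
    then show "(\<Sum>v\<in>e. f v) = (\<Sum>v\<in>V. if v \<in> e then f v else 0)"
      using sum.inter_filter[OF assms(1), of f "\<lambda>v. v \<in> e"] by simp
  qed
  also have "\<dots> = (\<Sum>v\<in>V. \<Sum>e\<in>E. if v \<in> e then f v else 0)"
    by (rule sum.swap)
  also have "\<dots> = (\<Sum>v\<in>V. of_nat (card {e\<in>E. v \<in> e}) * f v)"
    using assms(2) by (simp flip: sum.inter_filter)
  finally show ?thesis .
qed

lemma partition_fn_eq_sum_monochromatic:
  assumes "finite E" "\<And>e. e \<in> E \<Longrightarrow> card e = 2"
  shows "partition_fn V E a b = (\<Sum>\<sigma>\<in>V \<rightarrow>\<^sub>E {0, 1}.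
           a ^ card (monochromatic_edges E \<sigma> 0) * b ^ card (monochromatic_edges E \<sigma> 1))"
  unfolding partition_fn_def using prod_gab_eq_monochromatic[OF assms] by simp

lemma three_regular_monochromatic_cong:
  assumes G: "three_regular_graph V E" and \<sigma>: "\<sigma> \<in> V \<rightarrow>\<^sub>E {0, 1}"
  shows "(3::int) dvd int (card (monochromatic_edges E \<sigma> 0)) - int (card (monochromatic_edges E \<sigma> 1))"
proof -
  note G = three_regular_graphD[OF G]
  define w where "w v = (if \<sigma> v = 0 then 1 else - 1 :: int)" for v
  have edge: "(\<Sum>v\<in>e. w v) =
      2 * of_bool (e \<in> monochromatic_edges E \<sigma> 0) - 2 * of_bool (e \<in> monochromatic_edges E \<sigma> 1)"
    if e: "e \<in> E" for e
  proof -
    obtain x y where xy: "e = {x, y}" "x \<noteq> y"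
      using G(4)[OF e] by (auto simp: card_2_iff)
    moreover have "\<sigma> x \<in> {0, 1}" "\<sigma> y \<in> {0, 1}"
      using \<sigma> G(3)[OF e] xy by auto
    ultimately show ?thesis
      using e by (auto simp: w_def monochromatic_edges_def)
  qed
  have "2 * (int (card (monochromatic_edges E \<sigma> 0)) - int (card (monochromatic_edges E \<sigma> 1))) =
        (\<Sum>e\<in>E. \<Sum>v\<in>e. w v)"
    using G(2) by (simp add: edge sum_subtractf monochromatic_edges_def Int_def flip: sum_distrib_left)
  also have "\<dots> = (\<Sum>v\<in>V. 3 * w v)"
    using sum_edges_sum_endpoints[OF G(1-3)] G(5) by simp
  finally show ?thesis
    by (simp flip: sum_distrib_left) presburger
qed

definition flip_colouring :: "'v set \<Rightarrow> ('v \<Rightarrow> nat) \<Rightarrow> 'v \<Rightarrow> nat" where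
  "flip_colouring V \<sigma> = (\<lambda>v\<in>V. 1 - \<sigma> v)"

lemma flip_colouring_apply: "v \<in> V \<Longrightarrow> flip_colouring V \<sigma> v = 1 - \<sigma> v"
  by (simp add: flip_colouring_def)

lemma flip_colouring_PiE: "\<sigma> \<in> V \<rightarrow>\<^sub>E {0, 1} \<Longrightarrow> flip_colouring V \<sigma> \<in> V \<rightarrow>\<^sub>E {0, 1}"
  by (auto simp: flip_colouring_def)

lemma flip_colouring_flip_colouring:
  "\<sigma> \<in> V \<rightarrow>\<^sub>E {0, 1} \<Longrightarrow> flip_colouring V (flip_colouring V \<sigma>) = \<sigma>"
  by (auto simp: flip_colouring_def fun_eq_iff PiE_iff extensional_def)

lemma monochromatic_edges_flip_colouring:
  assumes "\<sigma> \<in> V \<rightarrow>\<^sub>E {0, 1}" "\<And>e. e \<in> E \<Longrightarrow> e \<subseteq> V" "k \<le> 1"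
  shows "monochromatic_edges E (flip_colouring V \<sigma>) k = monochromatic_edges E \<sigma> (1 - k)"
proof -
  have "flip_colouring V \<sigma> v = k \<longleftrightarrow> \<sigma> v = 1 - k" if "v \<in> V" for v
    using assms(1,3) that by (auto simp: flip_colouring_def PiE_iff)
  then show ?thesis
    using assms(2) unfolding monochromatic_edges_def by blast
qed

lemma partition_fn_eq_sum_symmetric:
  assumes "finite V" "\<And>e. e \<in> E \<Longrightarrow> e \<subseteq> V" "\<And>e. e \<in> E \<Longrightarrow> card e = 2" "v\<^sub>0 \<in> V"
  shows "partition_fn V E = (\<lambda>a b. \<Sum>\<sigma>\<in>{\<sigma>\<in>V \<rightarrow>\<^sub>E {0, 1}. \<sigma> v\<^sub>0 = 0}.
           a ^ card (monochromatic_edges E \<sigma> 0) * b ^ card (monochromatic_edges E \<sigma> 1) +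
           a ^ card (monochromatic_edges E \<sigma> 1) * b ^ card (monochromatic_edges E \<sigma> 0))"
    (is "_ = (\<lambda>a b. \<Sum>\<sigma>\<in>?S\<^sub>0. _)")
proof (intro ext)
  fix a b :: complex
  let ?t = "\<lambda>\<sigma>. a ^ card (monochromatic_edges E \<sigma> 0) * b ^ card (monochromatic_edges E \<sigma> 1)"
  let ?t' = "\<lambda>\<sigma>. a ^ card (monochromatic_edges E \<sigma> 1) * b ^ card (monochromatic_edges E \<sigma> 0)"
  define S\<^sub>1 where "S\<^sub>1 = {\<sigma>\<in>V \<rightarrow>\<^sub>E {0::nat, 1}. \<sigma> v\<^sub>0 = 1}"
  have "finite E"
    using assms(1,2) finite_subset[of E "Pow V"] by auto
  have split: "?S\<^sub>0 \<union> S\<^sub>1 = V \<rightarrow>\<^sub>E {0, 1}" "?S\<^sub>0 \<inter> S\<^sub>1 = {}"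
  proof -
    have "\<sigma> \<in> ?S\<^sub>0 \<union> S\<^sub>1 \<longleftrightarrow> \<sigma> \<in> V \<rightarrow>\<^sub>E {0, 1}" for \<sigma>
      using PiE_mem[of \<sigma> V "\<lambda>_. {0, 1}", OF _ assms(4)] unfolding S\<^sub>1_def by blast
    then show "?S\<^sub>0 \<union> S\<^sub>1 = V \<rightarrow>\<^sub>E {0, 1}"
      by blast
    show "?S\<^sub>0 \<inter> S\<^sub>1 = {}"
      unfolding S\<^sub>1_def by auto
  qed
  have finite: "finite ?S\<^sub>0" "finite S\<^sub>1"
    using assms(1) by (simp_all add: S\<^sub>1_def finite_PiE)
  have flipped: "(\<Sum>\<sigma>\<in>S\<^sub>1. ?t \<sigma>) = (\<Sum>\<sigma>\<in>?S\<^sub>0. ?t' \<sigma>)"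
  proof (rule sum.reindex_bij_witness[of _ "flip_colouring V" "flip_colouring V"])
    fix \<sigma> assume "\<sigma> \<in> S\<^sub>1"
    then have \<sigma>: "\<sigma> \<in> V \<rightarrow>\<^sub>E {0, 1}" "\<sigma> v\<^sub>0 = 1"
      unfolding S\<^sub>1_def by simp_all
    show "flip_colouring V (flip_colouring V \<sigma>) = \<sigma>"
      by (rule flip_colouring_flip_colouring[OF \<sigma>(1)])
    show "flip_colouring V \<sigma> \<in> ?S\<^sub>0"
      using flip_colouring_PiE[OF \<sigma>(1)] flip_colouring_apply[OF assms(4)] \<sigma>(2) by simp
    show "?t' (flip_colouring V \<sigma>) = ?t \<sigma>"
      using \<sigma>(1) assms(2) by (simp add: monochromatic_edges_flip_colouring)
  next
    fix \<sigma> assume "\<sigma> \<in> ?S\<^sub>0"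
    then have \<sigma>: "\<sigma> \<in> V \<rightarrow>\<^sub>E {0, 1}" "\<sigma> v\<^sub>0 = 0"
      by simp_all
    show "flip_colouring V (flip_colouring V \<sigma>) = \<sigma>"
      by (rule flip_colouring_flip_colouring[OF \<sigma>(1)])
    show "flip_colouring V \<sigma> \<in> S\<^sub>1"
      using flip_colouring_PiE[OF \<sigma>(1)] flip_colouring_apply[OF assms(4)] \<sigma>(2) by (simp add: S\<^sub>1_def)
  qed
  have "partition_fn V E a b = (\<Sum>\<sigma>\<in>V \<rightarrow>\<^sub>E {0, 1}. ?t \<sigma>)"
    by (rule partition_fn_eq_sum_monochromatic[OF \<open>finite E\<close> assms(3)])
  also have "\<dots> = (\<Sum>\<sigma>\<in>?S\<^sub>0 \<union> S\<^sub>1. ?t \<sigma>)"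
    by (simp only: split(1))
  also have "\<dots> = (\<Sum>\<sigma>\<in>?S\<^sub>0. ?t \<sigma>) + (\<Sum>\<sigma>\<in>S\<^sub>1. ?t \<sigma>)"
    by (rule sum.union_disjoint[OF finite split(2)])
  finally show "partition_fn V E a b = (\<Sum>\<sigma>\<in>?S\<^sub>0. ?t \<sigma> + ?t' \<sigma>)"
    by (simp only: flipped sum.distrib)
qed

lemma int_poly_in_ab_cubes_partition_fn:
  assumes "three_regular_graph V E"
  shows "int_poly_in_ab_cubes (partition_fn V E)"
proof (cases "V = {}")
  case True
  then have "E = {}"
    using three_regular_graphD(3,4)[OF assms] by fastforce
  with True have "partition_fn V E = (\<lambda>a b. 1)"
    by (simp add: partition_fn_def fun_eq_iff)
  then show ?thesis
    by (simp add: int_poly_in_ab_cubes_one)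
next
  case False
  then obtain v\<^sub>0 where "v\<^sub>0 \<in> V"
    by blast
  note G = three_regular_graphD[OF assms]
  show ?thesis
    using G \<open>v\<^sub>0 \<in> V\<close> three_regular_monochromatic_cong[OF assms]
    by (subst partition_fn_eq_sum_symmetric[where v\<^sub>0 = v\<^sub>0])
      (auto simp: finite_PiE intro!: int_poly_in_ab_cubes_sum int_poly_in_ab_cubes_symmetric_monomial)
qed

theorem lemma4p1:
  fixes V :: "'v set" and E :: "'v set set"
  assumes "three_regular_graph V E"
  shows "\<exists>(N::nat) (c :: nat \<Rightarrow> nat \<Rightarrow> int). \<forall>a b :: complex.
           partition_fn V E a b =
           (\<Sum>i\<le>N. \<Sum>j\<le>N. of_int (c i j) * (a * b) ^ i * (a ^ 3 + b ^ 3) ^ j)"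
  using int_poly_in_ab_cubes_partition_fn[OF assms] by (rule int_poly_in_ab_cubes_imp_double_sum)

end
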